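(* Let $\mu$ be the Cauchy distribution $d\mu(x)=\frac1\pi\frac{dx}{1+x^2}$, $\alpha\ge0$, $\beta>0$, $s=\alpha+\beta$. For $u_0\in\mathbb R$ let $u=f_{\alpha,\beta}(u_0)$ and $v=v_s(u_0)$. Then \[\frac{du}{du_0}=\frac{(1+v)(s^2+4\alpha v^2(1+v))-(\alpha-\beta)sv}{s(1+v)(s+2v^2(1+v))}.\]
   Context: $v_s(u)=\inf\{v>0:\int\frac{d\mu(x)}{(u-x)^2+v^2}\le\frac1s\}$; $f_{\alpha,\beta}(u_0)=\mathrm{Re}[H_{\alpha-\beta}(u_0+iv_s(u_0))]=u_0+(\alpha-\beta)\int\frac{(u_0-x)\,d\mu(x)}{(u_0-x)^2+v_s(u_0)^2}$, where $H_r(z)=z+r\int\frac{d\mu(x)}{z-x}$. *)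

theory Defs
  imports "HOL-Probability.Probability"
begin

definition cauchy_measure :: "real measure" where
  "cauchy_measure = density lborel (\<lambda>x. ennreal (1 / (pi * (1 + x\<^sup>2))))"

definition v_s :: "real measure \<Rightarrow> real \<Rightarrow> real \<Rightarrow> real" where
  "v_s \<mu> s u = Inf {v. v > 0 \<and> (\<integral>x. 1 / ((u - x)\<^sup>2 + v\<^sup>2) \<partial>\<mu>) \<le> 1 / s}"

definition f_ab :: "real measure \<Rightarrow> real \<Rightarrow> real \<Rightarrow> real \<Rightarrow> real" where
  "f_ab \<mu> \<alpha> \<beta> u0 = u0 + (\<alpha> - \<beta>) *
     (\<integral>x. (u0 - x) / ((u0 - x)\<^sup>2 + (v_s \<mu> (\<alpha> + \<beta>) u0)\<^sup>2) \<partial>\<mu>)"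

end

theory Submission
  imports Defs "HOL-Real_Asymp.Real_Asymp"
begin

text \<open>
  The Cauchy transform of the Cauchy distribution is \<open>\<integral> d\<mu>(x) / (z - x) = 1 / (z + i)\<close> on the
  upper half plane. Taking imaginary and real parts at \<open>z = u + i v\<close> gives
  \<open>\<integral> d\<mu>(x) / ((u - x)\<^sup>2 + v\<^sup>2) = (1 + v) / (v (u\<^sup>2 + (1 + v)\<^sup>2))\<close> and
  \<open>\<integral> (u - x) d\<mu>(x) / ((u - x)\<^sup>2 + v\<^sup>2) = u / (u\<^sup>2 + (1 + v)\<^sup>2)\<close>; here both are verified
  with explicit antiderivatives. Consequently \<open>v\<^sub>s(u)\<close> is the unique \<open>v > 0\<close> with
  \<open>u\<^sup>2 = s (1 + v) / v - (1 + v)\<^sup>2\<close>, whose right-hand side is strictly decreasing in \<open>v\<close>, and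
  \<open>f\<^sub>\<alpha>\<^sub>,\<^sub>\<beta>(u) = u + (\<alpha> - \<beta>) / s \<cdot> u v / (1 + v)\<close> with \<open>v = v\<^sub>s(u)\<close>. The derivative
  then follows from the inverse function rule for \<open>v\<close> as a function of \<open>u\<^sup>2\<close>.
\<close>

lemma integral_lborel_eq_limits:
  fixes F g :: "real \<Rightarrow> real" and a b :: real
  assumes deriv: "\<And>x. (F has_real_derivative g x) (at x)" and cont: "\<And>x. isCont g x"
    and int: "integrable lborel g"
    and bot: "(F \<longlongrightarrow> a) at_bot" and top: "(F \<longlongrightarrow> b) at_top"
  shows "integral\<^sup>L lborel g = b - a"
proof -
  have "(LBINT x=-\<infinity>..\<infinity>. g x) = b - a"
  proof (rule interval_integral_FTC_integrable)
    show "(F has_vector_derivative g x) (at x)" for x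
      using deriv[of x] by (simp add: has_real_derivative_iff_has_vector_derivative)
    show "set_integrable lborel (einterval (-\<infinity>) \<infinity>) g"
      using int by (simp add: set_integrable_def einterval_eq_UNIV)
    show "((F \<circ> real_of_ereal) \<longlongrightarrow> a) (at_right (-\<infinity>))"
      using bot by (simp add: ereal_tendsto_simps1)
    show "((F \<circ> real_of_ereal) \<longlongrightarrow> b) (at_left \<infinity>)"
      using top by (simp add: ereal_tendsto_simps1)
  qed (use cont in simp_all)
  then show ?thesis
    by (simp add: interval_lebesgue_integral_def set_lebesgue_integral_def einterval_eq_UNIV)
qed

lemma abs_affine_le_shifted_square:
  fixes a b u v x :: real
  assumes "v > 0"
  shows "\<bar>a * x + b\<bar> \<le> (\<bar>a\<bar> / (2 * v) + (\<bar>a\<bar> * \<bar>u\<bar> + \<bar>b\<bar>) / v\<^sup>2) * ((x - u)\<^sup>2 + v\<^sup>2)"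
proof -
  have "2 * v * \<bar>x - u\<bar> \<le> (x - u)\<^sup>2 + v\<^sup>2"
    using sum_squares_bound[of "\<bar>x - u\<bar>" v] by (simp add: power2_eq_square algebra_simps)
  then have "\<bar>a\<bar> / (2 * v) * (2 * v * \<bar>x - u\<bar>) \<le> \<bar>a\<bar> / (2 * v) * ((x - u)\<^sup>2 + v\<^sup>2)"
    using assms by (intro mult_left_mono) auto
  then have lin: "\<bar>a * (x - u)\<bar> \<le> \<bar>a\<bar> / (2 * v) * ((x - u)\<^sup>2 + v\<^sup>2)"
    using assms by (simp add: abs_mult)
  have "\<bar>a * u + b\<bar> \<le> (\<bar>a\<bar> * \<bar>u\<bar> + \<bar>b\<bar>) / v\<^sup>2 * v\<^sup>2"
    using assms abs_triangle_ineq[of "a * u" b] by (simp add: abs_mult)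
  also have "\<dots> \<le> (\<bar>a\<bar> * \<bar>u\<bar> + \<bar>b\<bar>) / v\<^sup>2 * ((x - u)\<^sup>2 + v\<^sup>2)"
    by (intro mult_left_mono) auto
  finally have const: "\<bar>a * u + b\<bar> \<le> (\<bar>a\<bar> * \<bar>u\<bar> + \<bar>b\<bar>) / v\<^sup>2 * ((x - u)\<^sup>2 + v\<^sup>2)" .
  have "\<bar>a * x + b\<bar> \<le> \<bar>a * (x - u)\<bar> + \<bar>a * u + b\<bar>"
    using abs_triangle_ineq[of "a * (x - u)" "a * u + b"] by (simp add: algebra_simps)
  with lin const show ?thesis
    by (simp add: distrib_right)
qed

lemma integrable_affine_div_quartic:
  fixes a b u v :: real
  assumes "v > 0"
  shows "integrable lborel (\<lambda>x. (a * x + b) / ((x\<^sup>2 + 1) * ((x - u)\<^sup>2 + v\<^sup>2)))"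
proof (rule Bochner_Integration.integrable_bound)
  define C where "C = \<bar>a\<bar> / (2 * v) + (\<bar>a\<bar> * \<bar>u\<bar> + \<bar>b\<bar>) / v\<^sup>2"
  show "integrable lborel (\<lambda>x. C * inverse (1 + x\<^sup>2))"
    using integrable_inverse_1_plus_square
    by (simp add: set_integrable_def einterval_eq_UNIV)
  show "AE x in lborel. norm ((a * x + b) / ((x\<^sup>2 + 1) * ((x - u)\<^sup>2 + v\<^sup>2)))
                        \<le> norm (C * inverse (1 + x\<^sup>2))"
  proof (intro AE_I2)
    fix x :: real
    have Q: "(x - u)\<^sup>2 + v\<^sup>2 > 0" using assms by (simp add: add_nonneg_pos)
    have P: "x\<^sup>2 + 1 > 0" by (simp add: add_nonneg_pos)
    have "\<bar>a * x + b\<bar> / ((x - u)\<^sup>2 + v\<^sup>2) \<le> C"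
      using abs_affine_le_shifted_square[OF assms, of a x b u] Q
      unfolding C_def by (simp add: divide_le_eq)
    then have "\<bar>a * x + b\<bar> / ((x - u)\<^sup>2 + v\<^sup>2) * inverse (1 + x\<^sup>2) \<le> C * inverse (1 + x\<^sup>2)"
      using P by (intro mult_right_mono) auto
    also have "\<dots> \<le> norm (C * inverse (1 + x\<^sup>2))"
      by simp
    finally show "norm ((a * x + b) / ((x\<^sup>2 + 1) * ((x - u)\<^sup>2 + v\<^sup>2))) \<le> norm (C * inverse (1 + x\<^sup>2))"
      using P Q by (simp add: abs_mult field_simps)
  qed
qed measurable

lemma lborel_integral_partial_fractions:
  fixes u v A B :: real
  assumes v: "v > 0"
  defines "k \<equiv> u\<^sup>2 + v\<^sup>2 - 1"
  shows "(\<integral>x. ((A * k - 2 * u * B) * x + (B * k + 2 * u * A)) / ((x\<^sup>2 + 1) * ((x - u)\<^sup>2 + v\<^sup>2)) \<partial>lborel)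
           = pi * (B + (u * A - B) / v)"
proof -
  define F where "F x = A / 2 * (ln (x\<^sup>2 + 1) - ln ((x - u)\<^sup>2 + v\<^sup>2)) + B * arctan x
                        + (u * A - B) / v * arctan ((x - u) / v)" for x
  have "(F has_real_derivative
          ((A * k - 2 * u * B) * x + (B * k + 2 * u * A)) / ((x\<^sup>2 + 1) * ((x - u)\<^sup>2 + v\<^sup>2))) (at x)"
    for x
  proof -
    have Q: "(x - u)\<^sup>2 + v\<^sup>2 > 0" and P: "x\<^sup>2 + 1 > 0"
      using v by (simp_all add: add_nonneg_pos)
    have arctan_term: "1 / v / (1 + ((x - u) / v)\<^sup>2) = v / ((x - u)\<^sup>2 + v\<^sup>2)"
      using Q v by (simp add: field_simps power2_eq_square)
    have partial_fractions: "A / 2 * (2 * x / (x\<^sup>2 + 1) - 2 * (x - u) / ((x - u)\<^sup>2 + v\<^sup>2))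
            + B / (1 + x\<^sup>2) + (u * A - B) / v * (v / ((x - u)\<^sup>2 + v\<^sup>2))
        = ((A * k - 2 * u * B) * x + (B * k + 2 * u * A)) / ((x\<^sup>2 + 1) * ((x - u)\<^sup>2 + v\<^sup>2))"
      unfolding k_def using P Q v
      by (simp add: divide_simps) (simp add: algebra_simps power2_eq_square)
    have "(F has_real_derivative A / 2 * (2 * x / (x\<^sup>2 + 1) - 2 * (x - u) / ((x - u)\<^sup>2 + v\<^sup>2))
            + B / (1 + x\<^sup>2) + (u * A - B) / v * (1 / v / (1 + ((x - u) / v)\<^sup>2))) (at x)"
      unfolding F_def using P Q v
      by (auto intro!: derivative_eq_intros) (simp add: field_simps)
    then show ?thesis
      unfolding arctan_term partial_fractions .
  qed
  moreover have "(F \<longlongrightarrow> B * (- (pi / 2)) + (u * A - B) / v * (- (pi / 2))) at_bot"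
    "(F \<longlongrightarrow> B * (pi / 2) + (u * A - B) / v * (pi / 2)) at_top"
    unfolding F_def using v by real_asymp+
  ultimately have "(\<integral>x. ((A * k - 2 * u * B) * x + (B * k + 2 * u * A)) / ((x\<^sup>2 + 1) * ((x - u)\<^sup>2 + v\<^sup>2)) \<partial>lborel)
      = (B * (pi / 2) + (u * A - B) / v * (pi / 2)) - (B * (- (pi / 2)) + (u * A - B) / v * (- (pi / 2)))"
    using v by (intro integral_lborel_eq_limits)
      (auto intro!: continuous_intros integrable_affine_div_quartic simp: add_nonneg_eq_0_iff)
  then show ?thesis
    by (simp add: algebra_simps)
qed

lemma lborel_integral_affine_div_1_plus_square_sq:
  fixes c1 c0 :: real
  shows "(\<integral>x. (c1 * x + c0) / (x\<^sup>2 + 1)\<^sup>2 \<partial>lborel) = c0 * pi / 2"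
proof -
  define F where "F x = c0 * (arctan x / 2 + x / (2 * (1 + x\<^sup>2))) - c1 / (2 * (1 + x\<^sup>2))" for x :: real
  have "(F has_real_derivative (c1 * x + c0) / (x\<^sup>2 + 1)\<^sup>2) (at x)" for x
  proof -
    have nz: "1 + x\<^sup>2 \<noteq> 0" "2 + 2 * x\<^sup>2 \<noteq> 0" "x\<^sup>2 + 1 \<noteq> 0"
      by (auto simp: add_nonneg_eq_0_iff)
    show ?thesis
      unfolding F_def
      by (auto intro!: derivative_eq_intros simp: nz) (simp add: divide_simps nz, algebra)
  qed
  moreover have "(F \<longlongrightarrow> c0 * (- (pi / 2) / 2)) at_bot" "(F \<longlongrightarrow> c0 * (pi / 2 / 2)) at_top"
    unfolding F_def by real_asymp+
  moreover have "integrable lborel (\<lambda>x. (c1 * x + c0) / (x\<^sup>2 + 1)\<^sup>2)"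
    using integrable_affine_div_quartic[of 1 c1 c0 0] by (simp add: power2_eq_square)
  ultimately have "(\<integral>x. (c1 * x + c0) / (x\<^sup>2 + 1)\<^sup>2 \<partial>lborel) = c0 * (pi / 2 / 2) - c0 * (- (pi / 2) / 2)"
    by (intro integral_lborel_eq_limits) (auto intro!: continuous_intros simp: add_nonneg_eq_0_iff)
  then show ?thesis
    by simp
qed

lemma integral_cauchy_measure:
  fixes h :: "real \<Rightarrow> real"
  assumes "h \<in> borel_measurable borel"
  shows "(\<integral>x. h x \<partial>cauchy_measure) = (\<integral>x. h x / (pi * (1 + x\<^sup>2)) \<partial>lborel)"
  unfolding cauchy_measure_def using assms by (subst integral_density) auto

lemma cauchy_integral_affine_div_shifted_square:
  fixes u v c1 c0 :: real
  assumes v: "v > 0"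
  shows "(\<integral>x. (c1 * x + c0) / ((u - x)\<^sup>2 + v\<^sup>2) \<partial>cauchy_measure)
           = (c1 * u + c0 * (1 + v)) / (v * (u\<^sup>2 + (1 + v)\<^sup>2))"
proof -
  have "(\<integral>x. (c1 * x + c0) / ((u - x)\<^sup>2 + v\<^sup>2) \<partial>cauchy_measure)
      = (\<integral>x. (c1 * x + c0) / ((x\<^sup>2 + 1) * ((x - u)\<^sup>2 + v\<^sup>2)) / pi \<partial>lborel)"
    by (simp add: integral_cauchy_measure power2_commute add.commute mult.commute mult.assoc)
  also have "\<dots> = (\<integral>x. (c1 * x + c0) / ((x\<^sup>2 + 1) * ((x - u)\<^sup>2 + v\<^sup>2)) \<partial>lborel) / pi"
    by (rule integral_divide_zero)
  also have "\<dots> = (c1 * u + c0 * (1 + v)) / (v * (u\<^sup>2 + (1 + v)\<^sup>2))"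
  proof (cases "u = 0 \<and> v = 1")
    \<comment> \<open>the two quadratic factors coincide, so there is no partial fraction decomposition\<close>
    case True
    then show ?thesis
      using lborel_integral_affine_div_1_plus_square_sq[of c1 c0] by (simp add: power2_eq_square)
  next
    case False
    define k where "k = u\<^sup>2 + v\<^sup>2 - 1"
    define M where "M = u\<^sup>2 + (1 - v)\<^sup>2"
    define R where "R = u\<^sup>2 + (1 + v)\<^sup>2"
    have M: "M \<noteq> 0"
      unfolding M_def using False by (auto simp: add_nonneg_eq_0_iff)
    have R: "R > 0"
      unfolding R_def using v by (simp add: add_nonneg_pos)
    have \<Delta>: "k\<^sup>2 + 4 * u\<^sup>2 = R * M"
      unfolding k_def M_def R_def by algebra
    define A where "A = (c1 * k + 2 * u * c0) / (R * M)"
    define B where "B = (c0 * k - 2 * u * c1) / (R * M)"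
    have "A * k - 2 * u * B = c1"
      unfolding A_def B_def \<Delta>[symmetric] using M R \<Delta> by (simp add: divide_simps) algebra
    moreover have "B * k + 2 * u * A = c0"
      unfolding A_def B_def \<Delta>[symmetric] using M R \<Delta> by (simp add: divide_simps) algebra
    ultimately have "(\<integral>x. (c1 * x + c0) / ((x\<^sup>2 + 1) * ((x - u)\<^sup>2 + v\<^sup>2)) \<partial>lborel)
        = pi * (A * u + B * (v - 1)) / v"
      using lborel_integral_partial_fractions[OF v, where u = u and A = A and B = B] v
      unfolding k_def by (simp add: field_simps)
    moreover have "A * u + B * (v - 1) = ((c1 * k + 2 * u * c0) * u + (c0 * k - 2 * u * c1) * (v - 1)) / (R * M)"
      unfolding A_def B_def using M R by (simp add: field_simps)
    also have "\<dots> = M * (c1 * u + c0 * (1 + v)) / (R * M)"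
      unfolding k_def M_def by algebra
    also have "\<dots> = (c1 * u + c0 * (1 + v)) / R"
      using M by simp
    ultimately show ?thesis
      unfolding R_def by simp
  qed
  finally show ?thesis .
qed

definition cauchy_level :: "real \<Rightarrow> real \<Rightarrow> real" where
  "cauchy_level s v = s * (1 + v) / v - (1 + v)\<^sup>2"

definition cauchy_level_inv :: "real \<Rightarrow> real \<Rightarrow> real" where
  "cauchy_level_inv s w = (THE v. v > 0 \<and> cauchy_level s v = w)"

lemma cauchy_level_strict_antimono:
  fixes s y z :: real
  assumes "s > 0" "0 < y" "y < z"
  shows "cauchy_level s z < cauchy_level s y"
proof -
  have "s / z < s / y"
    using assms by (simp add: divide_strict_left_mono)
  moreover have "(1 + y)\<^sup>2 < (1 + z)\<^sup>2"
    using assms by (simp add: power_strict_mono)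
  moreover have "cauchy_level s x = s / x + s - (1 + x)\<^sup>2" if "x > 0" for x
    unfolding cauchy_level_def using that by (simp add: field_simps)
  ultimately show ?thesis
    using assms by simp
qed

lemma cauchy_level_le_iff:
  fixes s y z :: real
  assumes "s > 0" "y > 0" "z > 0"
  shows "cauchy_level s y \<le> cauchy_level s z \<longleftrightarrow> z \<le> y"
proof
  assume "cauchy_level s y \<le> cauchy_level s z"
  then show "z \<le> y"
    using cauchy_level_strict_antimono[OF assms(1,2), of z] by linarith
next
  assume "z \<le> y"
  then show "cauchy_level s y \<le> cauchy_level s z"
    using cauchy_level_strict_antimono[OF assms(1,3), of y] by (cases "z = y") auto
qed

lemma cauchy_level_surj:
  fixes s w :: real
  assumes s: "s > 0"
  shows "\<exists>v>0. cauchy_level s v = w"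
proof -
  have "filterlim (cauchy_level s) at_top (at_right 0)"
    unfolding cauchy_level_def using s by real_asymp
  then have "\<forall>\<^sub>F v in at_right 0. w \<le> cauchy_level s v \<and> v > 0"
    unfolding filterlim_at_top by (intro eventually_conj eventually_at_right_less) auto
  then obtain y where y: "y > 0" "w \<le> cauchy_level s y"
    using eventually_happens'[of "at_right (0::real)"] by auto
  have "filterlim (cauchy_level s) at_bot at_top"
    unfolding cauchy_level_def using s by real_asymp
  then have "\<forall>\<^sub>F v in at_top. cauchy_level s v \<le> w \<and> y \<le> v"
    unfolding filterlim_at_bot by (intro eventually_conj eventually_ge_at_top) auto
  then obtain z where z: "cauchy_level s z \<le> w" "y \<le> z"
    using eventually_happens'[of "at_top :: real filter"] by auto
  have "continuous_on {y..z} (cauchy_level s)"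
    unfolding cauchy_level_def using y by (intro continuous_intros) auto
  then obtain v where "y \<le> v" "cauchy_level s v = w"
    using IVT2'[of "cauchy_level s" z w y] y z by blast
  with y show ?thesis
    by (intro exI[of _ v]) auto
qed

lemma cauchy_level_eq_iff:
  fixes s y z :: real
  assumes "s > 0" "y > 0" "z > 0"
  shows "cauchy_level s y = cauchy_level s z \<longleftrightarrow> y = z"
proof
  assume eq: "cauchy_level s y = cauchy_level s z"
  then have "z \<le> y"
    using cauchy_level_le_iff[OF assms] by simp
  moreover have "y \<le> z"
    using eq cauchy_level_le_iff[OF assms(1,3,2)] by simp
  ultimately show "y = z"
    by simp
qed simp

lemma cauchy_level_inv:
  fixes s w :: real
  assumes s: "s > 0"
  shows "cauchy_level_inv s w > 0" "cauchy_level s (cauchy_level_inv s w) = w"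
proof -
  have "\<exists>!v. v > 0 \<and> cauchy_level s v = w"
  proof (rule ex_ex1I)
    show "\<exists>v. v > 0 \<and> cauchy_level s v = w"
      using cauchy_level_surj[OF s] by blast
    show "y = z" if "y > 0 \<and> cauchy_level s y = w" "z > 0 \<and> cauchy_level s z = w" for y z
      using cauchy_level_eq_iff[OF s, of y z] that by auto
  qed
  then have "cauchy_level_inv s w > 0 \<and> cauchy_level s (cauchy_level_inv s w) = w"
    unfolding cauchy_level_inv_def by (rule theI')
  then show "cauchy_level_inv s w > 0" "cauchy_level s (cauchy_level_inv s w) = w"
    by auto
qed

lemma cauchy_level_inv_cauchy_level:
  fixes s v :: real
  assumes s: "s > 0" and v: "v > 0"
  shows "cauchy_level_inv s (cauchy_level s v) = v"
  using cauchy_level_eq_iff[OF s cauchy_level_inv(1)[OF s] v] cauchy_level_inv(2)[OF s] by blast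

lemma v_s_cauchy_measure:
  fixes s u :: real
  assumes s: "s > 0"
  shows "v_s cauchy_measure s u = cauchy_level_inv s (u\<^sup>2)"
proof -
  have "(\<integral>x. 1 / ((u - x)\<^sup>2 + v\<^sup>2) \<partial>cauchy_measure) \<le> 1 / s \<longleftrightarrow> cauchy_level s v \<le> u\<^sup>2"
    if v: "v > 0" for v
  proof -
    define R where "R = u\<^sup>2 + (1 + v)\<^sup>2"
    have R: "R > 0"
      unfolding R_def using v by (simp add: add_nonneg_pos)
    have "(\<integral>x. 1 / ((u - x)\<^sup>2 + v\<^sup>2) \<partial>cauchy_measure) = (1 + v) / (v * R)"
      unfolding R_def using cauchy_integral_affine_div_shifted_square[OF v, of 0 1 u] by simp
    also have "\<dots> \<le> 1 / s \<longleftrightarrow> s * (1 + v) / v \<le> R"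
      using v R s by (simp add: divide_simps mult.commute)
    also have "\<dots> \<longleftrightarrow> cauchy_level s v \<le> u\<^sup>2"
      unfolding cauchy_level_def R_def by linarith
    finally show ?thesis .
  qed
  then have "{v. v > 0 \<and> (\<integral>x. 1 / ((u - x)\<^sup>2 + v\<^sup>2) \<partial>cauchy_measure) \<le> 1 / s}
      = {v. v > 0 \<and> cauchy_level s v \<le> cauchy_level s (cauchy_level_inv s (u\<^sup>2))}"
    unfolding cauchy_level_inv(2)[OF s] by blast
  also have "\<dots> = {cauchy_level_inv s (u\<^sup>2)..}"
    using cauchy_level_le_iff[OF s] cauchy_level_inv(1)[OF s, of "u\<^sup>2"] by force
  finally show ?thesis
    unfolding v_s_def by simp
qed

lemma cauchy_level_has_real_derivative:
  fixes s v :: real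
  assumes "v \<noteq> 0"
  shows "(cauchy_level s has_real_derivative - s / v\<^sup>2 - 2 * (1 + v)) (at v)"
proof -
  have "cauchy_level s = (\<lambda>v. s * (1 + v) / v - (1 + v)\<^sup>2)"
    by (simp add: cauchy_level_def fun_eq_iff)
  then show ?thesis
    using assms by (auto intro!: derivative_eq_intros) (simp add: field_simps power2_eq_square)
qed

lemma cauchy_level_inv_has_real_derivative:
  fixes s w :: real
  assumes s: "s > 0"
  defines "v \<equiv> cauchy_level_inv s w"
  shows "(cauchy_level_inv s has_real_derivative inverse (- s / v\<^sup>2 - 2 * (1 + v))) (at w)"
proof (rule DERIV_inverse_function[where a = "w - 1" and b = "w + 1"])
  have v: "v > 0"
    unfolding v_def using cauchy_level_inv(1)[OF s] .
  then show "(cauchy_level s has_real_derivative - s / v\<^sup>2 - 2 * (1 + v)) (at (cauchy_level_inv s w))"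
    unfolding v_def by (intro cauchy_level_has_real_derivative) simp
  have "s / v\<^sup>2 > 0"
    using s v by simp
  then show "- s / v\<^sup>2 - 2 * (1 + v) \<noteq> 0"
    using v by (simp add: minus_divide_left[symmetric])
  show "cauchy_level s (cauchy_level_inv s y) = y" for y
    using cauchy_level_inv(2)[OF s] .
  have "isCont (cauchy_level_inv s) (cauchy_level s v)"
  proof (rule isCont_inverse_function[where f = "cauchy_level s" and x = v and d = "v / 2"])
    show "0 < v / 2"
      using v by simp
    fix z
    assume "\<bar>z - v\<bar> \<le> v / 2"
    then have "z > 0"
      using v by linarith
    then show "cauchy_level_inv s (cauchy_level s z) = z" "isCont (cauchy_level s) z"
      using s by (auto intro!: cauchy_level_inv_cauchy_level DERIV_isCont cauchy_level_has_real_derivative)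
  qed
  then show "isCont (cauchy_level_inv s) w"
    unfolding v_def cauchy_level_inv(2)[OF s] .
qed simp_all

lemma f_ab_cauchy_measure:
  fixes \<alpha> \<beta> u :: real
  assumes s: "\<alpha> + \<beta> > 0"
  defines "v \<equiv> cauchy_level_inv (\<alpha> + \<beta>) (u\<^sup>2)"
  shows "f_ab cauchy_measure \<alpha> \<beta> u = u + (\<alpha> - \<beta>) / (\<alpha> + \<beta>) * (u * v / (1 + v))"
proof -
  have v: "v > 0" and level: "cauchy_level (\<alpha> + \<beta>) v = u\<^sup>2"
    unfolding v_def using cauchy_level_inv[OF s] by auto
  then have R: "u\<^sup>2 + (1 + v)\<^sup>2 = (\<alpha> + \<beta>) * (1 + v) / v"
    unfolding cauchy_level_def by simp
  have "(\<integral>x. (u - x) / ((u - x)\<^sup>2 + v\<^sup>2) \<partial>cauchy_measure) = (- u + u * (1 + v)) / (v * (u\<^sup>2 + (1 + v)\<^sup>2))"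
    using cauchy_integral_affine_div_shifted_square[OF v, of "-1" u u] by simp
  also have "\<dots> = u * v / (v * ((\<alpha> + \<beta>) * (1 + v) / v))"
    unfolding R by (simp add: algebra_simps)
  also have "\<dots> = u * v / ((\<alpha> + \<beta>) * (1 + v))"
    using v by simp
  finally show ?thesis
    unfolding f_ab_def v_s_cauchy_measure[OF s] v_def[symmetric] by simp
qed

lemma f_ab_cauchy_derivative_closed_form:
  fixes \<alpha> \<beta> s u v :: real
  assumes s: "s > 0" "s = \<alpha> + \<beta>" and v: "v > 0" and level: "cauchy_level s v = u\<^sup>2"
  shows "1 + (\<alpha> - \<beta>) / s * ((v * (1 + v) + u * (inverse (- s / v\<^sup>2 - 2 * (1 + v)) * (2 * u))) / (1 + v)\<^sup>2)
       = ((1 + v) * (s\<^sup>2 + 4 * \<alpha> * v\<^sup>2 * (1 + v)) - (\<alpha> - \<beta>) * s * v)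
          / (s * (1 + v) * (s + 2 * v\<^sup>2 * (1 + v)))"
proof -
  define E where "E = s + 2 * v\<^sup>2 * (1 + v)"
  have E: "E > 0"
    unfolding E_def using s v by (simp add: add_pos_nonneg)
  have "inverse (- s / v\<^sup>2 - 2 * (1 + v)) = - v\<^sup>2 / E"
    unfolding E_def using v E[unfolded E_def] by (simp add: field_simps)
  then have "u * (inverse (- s / v\<^sup>2 - 2 * (1 + v)) * (2 * u)) = - 2 * v\<^sup>2 * u\<^sup>2 / E"
    by (simp add: power2_eq_square)
  also have "\<dots> = - 2 * v * (1 + v) * (s - v * (1 + v)) / E"
    unfolding level[symmetric] cauchy_level_def using v E by (simp add: field_simps power2_eq_square)
  finally have "1 + (\<alpha> - \<beta>) / s * ((v * (1 + v) + u * (inverse (- s / v\<^sup>2 - 2 * (1 + v)) * (2 * u))) / (1 + v)\<^sup>2)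
      = 1 + (\<alpha> - \<beta>) / s * ((v * (1 + v) - 2 * v * (1 + v) * (s - v * (1 + v)) / E) / (1 + v)\<^sup>2)"
    by simp
  also have "\<dots> = ((1 + v) * (s\<^sup>2 + 4 * \<alpha> * v\<^sup>2 * (1 + v)) - (\<alpha> - \<beta>) * s * v) / (s * (1 + v) * E)"
    using s v E by (simp add: divide_simps) (simp add: E_def s(2) algebra_simps power2_eq_square)
  finally show ?thesis
    unfolding E_def .
qed

theorem lemma6p7:
  fixes \<alpha> \<beta> u0 :: real
  assumes "\<alpha> \<ge> 0" and "\<beta> > 0"
  defines "s \<equiv> \<alpha> + \<beta>"
  defines "v \<equiv> v_s cauchy_measure s u0"
  shows "(f_ab cauchy_measure \<alpha> \<beta> has_real_derivative
          ((1 + v) * (s\<^sup>2 + 4 * \<alpha> * v\<^sup>2 * (1 + v)) - (\<alpha> - \<beta>) * s * v)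
          / (s * (1 + v) * (s + 2 * v\<^sup>2 * (1 + v)))) (at u0)"
proof -
  have sab: "s = \<alpha> + \<beta>" and s: "s > 0"
    unfolding s_def using assms(1,2) by simp_all
  define V where "V u = cauchy_level_inv s (u\<^sup>2)" for u
  have v: "v = V u0" "v > 0" and level: "cauchy_level s v = u0\<^sup>2"
    unfolding v_def V_def v_s_cauchy_measure[OF s] using cauchy_level_inv[OF s] by auto
  define dV where "dV = inverse (- s / v\<^sup>2 - 2 * (1 + v)) * (2 * u0)"
  have dV: "(V has_real_derivative dV) (at u0)"
    unfolding V_def v dV_def
    by (rule DERIV_chain2[OF cauchy_level_inv_has_real_derivative[OF s]]) (auto intro!: derivative_eq_intros)
  have "((\<lambda>u. u * V u / (1 + V u)) has_real_derivative (v * (1 + v) + u0 * dV) / (1 + v)\<^sup>2) (at u0)"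
    using dV v by (auto intro!: derivative_eq_intros simp: power2_eq_square algebra_simps)
  then have "((\<lambda>u. u + (\<alpha> - \<beta>) / s * (u * V u / (1 + V u))) has_real_derivative
      1 + (\<alpha> - \<beta>) / s * ((v * (1 + v) + u0 * dV) / (1 + v)\<^sup>2)) (at u0)"
    by (rule DERIV_add[OF DERIV_ident DERIV_cmult])
  moreover have "f_ab cauchy_measure \<alpha> \<beta> = (\<lambda>u. u + (\<alpha> - \<beta>) / s * (u * V u / (1 + V u)))"
    using f_ab_cauchy_measure[OF s[unfolded sab]] unfolding V_def sab by (simp add: fun_eq_iff)
  ultimately show ?thesis
    unfolding dV_def f_ab_cauchy_derivative_closed_form[OF s sab v(2) level] by simp
qed

end
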